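(* Let $Q=[0,1]^3$ and for a finite set $Y\subseteq Q$ let $E(Y)=\int_Q\operatorname{dist}^2(x,Y)\,dx$. Given $n$, let $Y_n$ be a minimizer of $E$ among all sets of $n$ points in $Q$. Let $y\in Y_n$, let $V=\{x\in Q:|x-y|\le|x-z|\ \forall z\in Y_n\}$ be its Voronoi cell, and let $r:=\max_{z'\in\partial V}|z'-y|$. Then \[\min_{z\in Y_n\setminus\{y\}}|y-z|\ \ge\ r\Big(\sqrt{1+\tfrac{2^4\cdot 3^3}{5^2\cdot 10^3}}-1\Big)\ \ge\ \Gamma_2|V|^{1/3},\] where $\Gamma_2:=\Big(\sqrt{1+\tfrac{2^4\cdot 3^3}{5^2\cdot 10^3}}-1\Big)\omega_3^{-1/3}$ and $\omega_3=4\pi/3$. *)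

theory Defs
  imports "HOL-Analysis.Analysis"
begin

definition unit_cube :: "(real^3) set" where
  "unit_cube = {x. \<forall>i. 0 \<le> x$i \<and> x$i \<le> 1}"

definition energy :: "(real^3) set \<Rightarrow> real" where
  "energy Y = integral unit_cube (\<lambda>x. (infdist x Y)^2)"

definition voronoi_cell :: "(real^3) set \<Rightarrow> real^3 \<Rightarrow> (real^3) set" where
  "voronoi_cell Y y = {x \<in> unit_cube. \<forall>z\<in>Y. dist x y \<le> dist x z}"

definition Gamma2 :: real where
  "Gamma2 = (sqrt (1 + (2^4 * 3^3) / (5^2 * 10^3)) - 1) * (4 * pi / 3) powr (-1/3)"

end

theory Submission
  imports Defs
begin

(* Let delta be the distance from y to its nearest neighbour z, and R the distance from y to the
   farthest point p of its cell V (V is compact, so p can be taken on the frontier).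
   Optimality forces y to be the centroid of V: otherwise moving y a little towards the centroid
   lowers the energy. Now replace y by p. Handing V over to z costs delta^2 |V|, since by the
   centroid property the integral of |x - z|^2 over V equals that of |x - y|^2 plus delta^2 |V|.
   But the copy p + (V - p)/8 of V, of volume |V|/512, lies within R/4 of p and, if R > 100 delta,
   at distance at least 7R/10 from z; serving it from p saves at least R^2/4 per unit volume.
   Optimality then gives R^2 <= 2048 delta^2, a contradiction. Hence R <= 100 delta, and the
   constant sqrt (1 + 432/25000) - 1 is below 1/100.
   The second inequality is |V| <= (4 pi/3) R^3. *)

lemma integrable_on_compact_continuous:
  fixes f :: "'a::euclidean_space \<Rightarrow> 'b::euclidean_space"
  assumes "compact S" "continuous_on S f"
  shows "f integrable_on S"
  using borel_integrable_compact[OF assms] set_borel_integral_eq_integral(1)[of S f]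
  unfolding set_integrable_def by simp

lemma measure_homothety:
  fixes S :: "'a::euclidean_space set"
  assumes "t \<ge> 0"
  shows "measure lebesgue ((\<lambda>x. p + t *\<^sub>R (x - p)) ` S) = t ^ DIM('a) * measure lebesgue S"
proof -
  have "(\<lambda>x. p + t *\<^sub>R (x - p)) = (\<lambda>x. t *\<^sub>R x + (p - t *\<^sub>R p))"
    by (auto simp: algebra_simps)
  then show ?thesis
    using measure_lebesgue_affine[of t "p - t *\<^sub>R p" S] assms by (simp only: abs_of_nonneg)
qed

lemma convex_homothety_image_subset:
  assumes "convex S" "p \<in> S" "0 \<le> t" "t \<le> 1"
  shows "(\<lambda>x. p + t *\<^sub>R (x - p)) ` S \<subseteq> S"
proof
  fix v assume "v \<in> (\<lambda>x. p + t *\<^sub>R (x - p)) ` S"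
  then obtain x where x: "x \<in> S" "v = p + t *\<^sub>R (x - p)" by auto
  then have "v = (1 - t) *\<^sub>R p + t *\<^sub>R x" by (simp add: algebra_simps)
  then show "v \<in> S" using x(1) assms convexD by fastforce
qed

lemma integral_dist_sq_shift:
  fixes y v :: "'a::euclidean_space"
  assumes "compact S"
  shows "integral S (\<lambda>x. (dist x (y + v))\<^sup>2)
           = integral S (\<lambda>x. (dist x y)\<^sup>2) - 2 * (integral S (\<lambda>x. x - y) \<bullet> v)
             + (norm v)\<^sup>2 * measure lebesgue S"
proof -
  have int: "f integrable_on S" if "continuous_on S f" for f :: "'a \<Rightarrow> 'b::euclidean_space"
    using integrable_on_compact_continuous[OF assms that] .
  have "(dist x (y + v))\<^sup>2 = (dist x y)\<^sup>2 - 2 * ((x - y) \<bullet> v) + (norm v)\<^sup>2" for x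
    by (simp add: dist_norm power2_norm_eq_inner inner_diff_left inner_diff_right inner_add_right
        inner_commute algebra_simps)
  then have "integral S (\<lambda>x. (dist x (y + v))\<^sup>2)
      = integral S (\<lambda>x. (dist x y)\<^sup>2) - 2 * integral S (\<lambda>x. (x - y) \<bullet> v)
        + integral S (\<lambda>x. (norm v)\<^sup>2)"
    by (simp add: integral_add integral_diff int continuous_intros)
  also have "integral S (\<lambda>x. (x - y) \<bullet> v) = integral S (\<lambda>x. x - y) \<bullet> v"
    by (simp add: int continuous_intros)
  also have "integral S (\<lambda>x. (norm v)\<^sup>2) = (norm v)\<^sup>2 * measure lebesgue S"
    using integral_cmul[of S "(norm v)\<^sup>2" "\<lambda>x. 1::real"]
    by (simp add: lmeasure_integral[OF lmeasurable_compact[OF assms]])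
  finally show ?thesis .
qed

lemma dist_closest_point_le:
  fixes S :: "'a::euclidean_space set"
  assumes "convex S" "closed S" "x \<in> S"
  shows "dist x (closest_point S q) \<le> dist x q"
  using closest_point_lipschitz[OF assms(1,2), of x q] closest_point_self[OF assms(3)] assms(3)
  by auto

lemma bounded_exists_frontier_farther:
  fixes S :: "'a::euclidean_space set"
  assumes "bounded S" "x \<in> S"
  obtains w where "w \<in> frontier S" "dist x y \<le> dist w y"
proof (cases "x = y")
  case True
  have "S \<noteq> UNIV" using assms(1) by auto
  then obtain w where "w \<in> frontier S" using assms(2) frontier_eq_empty by blast
  then show ?thesis using True that by simp
next
  case False
  define ray where "ray = (\<lambda>t. y + t *\<^sub>R (x - y)) ` {1..}"
  have "connected ray"
    unfolding ray_def by (intro connected_continuous_image connected_Ici continuous_intros)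
  moreover have "x \<in> ray \<inter> S"
    using assms(2) unfolding ray_def by (auto intro!: image_eqI[of _ _ 1])
  moreover have "ray - S \<noteq> {}"
  proof
    assume "ray - S = {}"
    then have "bounded ray" using assms(1) bounded_subset by blast
    then obtain B where B: "\<And>u. u \<in> ray \<Longrightarrow> dist y u \<le> B"
      using bounded_any_center by metis
    define t where "t = max 1 ((B + 1) / norm (x - y))"
    have "y + t *\<^sub>R (x - y) \<in> ray" by (auto simp: ray_def t_def)
    moreover have "dist y (y + t *\<^sub>R (x - y)) = t * norm (x - y)"
      by (simp add: dist_norm t_def)
    moreover have "(B + 1) / norm (x - y) * norm (x - y) \<le> t * norm (x - y)"
      by (intro mult_right_mono) (auto simp: t_def)
    ultimately show False using B False by fastforce
  qed
  ultimately obtain w where w: "w \<in> ray" "w \<in> frontier S"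
    using connected_Int_frontier by blast
  then obtain t where t: "t \<ge> 1" "w = y + t *\<^sub>R (x - y)" by (auto simp: ray_def)
  have "dist x y \<le> t * dist x y" using mult_right_mono[OF t(1) zero_le_dist] by simp
  also have "\<dots> = dist w y" using t by (simp add: dist_norm)
  finally show ?thesis by (rule that[OF w(2)])
qed

lemma compact_farthest_in_frontier:
  fixes S :: "'a::euclidean_space set"
  assumes "compact S" "S \<noteq> {}"
  obtains p where "p \<in> frontier S" "(SUP x\<in>frontier S. dist x y) = dist p y"
    "\<And>x. x \<in> S \<Longrightarrow> dist x y \<le> dist p y"
proof -
  have "S \<noteq> UNIV" using compact_imp_bounded[OF assms(1)] by auto
  then have "frontier S \<noteq> {}" using assms(2) frontier_eq_empty by blast
  moreover have "continuous_on (frontier S) (\<lambda>w. dist w y)" by (intro continuous_intros)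
  ultimately obtain p where p: "p \<in> frontier S" "\<forall>w\<in>frontier S. dist w y \<le> dist p y"
    using continuous_attains_sup[OF compact_frontier[OF assms(1)]] by blast
  have "(SUP x\<in>frontier S. dist x y) = dist p y"
    using p by (intro cSup_eq_maximum) auto
  moreover have "dist x y \<le> dist p y" if x: "x \<in> S" for x
  proof -
    obtain w where "w \<in> frontier S" "dist x y \<le> dist w y"
      using bounded_exists_frontier_farther[OF compact_imp_bounded[OF assms(1)] x] .
    then show ?thesis using p(2) by fastforce
  qed
  ultimately show ?thesis using that p(1) by blast
qed

lemma unit_cube_eq_cbox: "unit_cube = cbox 0 1"
  by (auto simp: unit_cube_def mem_box_cart)

lemma convex_unit_cube: "convex unit_cube"
  by (simp add: unit_cube_eq_cbox convex_box)

lemma closed_unit_cube: "closed unit_cube"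
  by (simp add: unit_cube_eq_cbox closed_cbox)

lemma measure_unit_cube: "measure lebesgue unit_cube = 1"
proof -
  have "cbox 0 (1::real^3) \<noteq> {}" using mem_box_cart(2)[of "0::real^3" 0 1] by auto
  then have "measure lborel (cbox 0 (1::real^3)) = 1" using content_cbox_cart[of 0 1] by simp
  then show ?thesis by (simp add: unit_cube_eq_cbox)
qed

lemma dist_unit_cube_le: "a \<in> unit_cube \<Longrightarrow> b \<in> unit_cube \<Longrightarrow> dist a b \<le> 3"
proof -
  assume a: "a \<in> unit_cube" and b: "b \<in> unit_cube"
  have "dist a b \<le> (\<Sum>i\<in>UNIV. \<bar>(a - b)$i\<bar>)" unfolding dist_norm by (rule norm_le_l1_cart)
  also have "\<dots> \<le> (\<Sum>i\<in>(UNIV :: 3 set). 1)"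
  proof (intro sum_mono)
    fix i
    have "0 \<le> a$i" "a$i \<le> 1" "0 \<le> b$i" "b$i \<le> 1" using a b by (auto simp: unit_cube_def)
    then show "\<bar>(a - b)$i\<bar> \<le> 1" by simp
  qed
  finally show ?thesis by simp
qed

lemma voronoi_cell_eq_halfspaces:
  "voronoi_cell Y y = unit_cube \<inter> (\<Inter>z\<in>Y. {x. (2 *\<^sub>R (z - y)) \<bullet> x \<le> z \<bullet> z - y \<bullet> y})"
proof -
  have "dist x y \<le> dist x z \<longleftrightarrow> (2 *\<^sub>R (z - y)) \<bullet> x \<le> z \<bullet> z - y \<bullet> y" for x z :: "real^3"
  proof -
    have "dist x y \<le> dist x z \<longleftrightarrow> (x - y) \<bullet> (x - y) \<le> (x - z) \<bullet> (x - z)"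
      by (simp add: dist_norm flip: power2_norm_eq_inner)
    also have "\<dots> \<longleftrightarrow> (2 *\<^sub>R (z - y)) \<bullet> x \<le> z \<bullet> z - y \<bullet> y"
      by (simp add: inner_diff_left inner_diff_right inner_commute algebra_simps)
    finally show ?thesis .
  qed
  then show ?thesis by (auto simp: voronoi_cell_def)
qed

lemma convex_voronoi_cell: "convex (voronoi_cell Y y)"
  unfolding voronoi_cell_eq_halfspaces
  by (intro convex_Int convex_unit_cube convex_INT ballI convex_halfspace_le)

lemma voronoi_cell_subset_unit_cube: "voronoi_cell Y y \<subseteq> unit_cube"
  by (auto simp: voronoi_cell_def)

lemma compact_voronoi_cell: "compact (voronoi_cell Y y)"
proof -
  have "closed (voronoi_cell Y y)"
    unfolding voronoi_cell_eq_halfspaces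
    by (intro closed_Int closed_unit_cube closed_INT ballI closed_halfspace_le)
  then show ?thesis
    using voronoi_cell_subset_unit_cube unit_cube_eq_cbox
    by (metis bounded_cbox bounded_subset compact_eq_bounded_closed)
qed

lemma generator_in_voronoi_cell: "y \<in> unit_cube \<Longrightarrow> y \<in> voronoi_cell Y y"
  by (auto simp: voronoi_cell_def)

lemma infdist_voronoi_cell:
  assumes "y \<in> Y" "x \<in> voronoi_cell Y y"
  shows "infdist x Y = dist x y"
proof (rule antisym)
  show "infdist x Y \<le> dist x y" by (rule infdist_le[OF assms(1)])
  show "dist x y \<le> infdist x Y"
    using assms unfolding infdist_def voronoi_cell_def by (auto intro!: cINF_greatest)
qed

lemma infdist_replace_outside_voronoi_cell:
  assumes "y \<in> Y" "x \<in> unit_cube" "x \<notin> voronoi_cell Y y"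
  shows "infdist x (insert q (Y - {y})) \<le> infdist x Y"
proof -
  obtain z where z: "z \<in> Y" "dist x z < dist x y"
    using assms unfolding voronoi_cell_def by force
  have "infdist x (insert q (Y - {y})) \<le> dist x a" if "a \<in> Y" for a
  proof (cases "a = y")
    case True
    have "infdist x (insert q (Y - {y})) \<le> dist x z" using z by (intro infdist_le) auto
    then show ?thesis using z True by simp
  next
    case False
    then show ?thesis using that by (intro infdist_le) auto
  qed
  then show ?thesis
    using assms(1) unfolding infdist_def[of x Y] by (auto intro!: cINF_greatest)
qed

lemma measure_voronoi_cell_pos:
  assumes "finite Y" "y \<in> unit_cube"
  shows "measure lebesgue (voronoi_cell Y y) > 0"
proof -
  obtain \<delta> where \<delta>: "\<delta> > 0" "\<And>w. w \<in> Y \<Longrightarrow> w \<noteq> y \<Longrightarrow> \<delta> \<le> dist y w"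
    using finite_set_avoid[OF assms(1), of y] by blast
  define s where "s = min 1 (\<delta> / 6)"
  have s: "0 < s" "s \<le> 1" "3 * s \<le> \<delta> / 2" using \<delta>(1) by (auto simp: s_def)
  define H where "H = (\<lambda>x. y + s *\<^sub>R (x - y)) ` unit_cube"
  have "H \<subseteq> voronoi_cell Y y"
  proof
    fix v assume "v \<in> H"
    then have vQ: "v \<in> unit_cube"
      using convex_homothety_image_subset[OF convex_unit_cube assms(2), of s] s
      by (auto simp: H_def)
    obtain x where x: "x \<in> unit_cube" "v = y + s *\<^sub>R (x - y)" using \<open>v \<in> H\<close> unfolding H_def by auto
    have "dist v y = s * dist x y" using x s by (simp add: dist_norm)
    also have "\<dots> \<le> s * 3" using dist_unit_cube_le[OF x(1) assms(2)] s by simp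
    finally have dvy: "dist v y \<le> \<delta> / 2" using s by simp
    have "dist v y \<le> dist v w" if "w \<in> Y" for w
    proof (cases "w = y")
      case False
      then show ?thesis
        using \<delta>(2)[OF that] dist_triangle[of y w v] dvy dist_commute[of y v] by linarith
    qed simp
    then show "v \<in> voronoi_cell Y y" using vQ by (simp add: voronoi_cell_def)
  qed
  moreover have "H \<in> lmeasurable"
    unfolding H_def unit_cube_eq_cbox
    by (intro lmeasurable_compact compact_continuous_image continuous_intros compact_cbox)
  ultimately have "measure lebesgue H \<le> measure lebesgue (voronoi_cell Y y)"
    by (intro measure_mono_fmeasurable[OF _ _ lmeasurable_compact[OF compact_voronoi_cell]])
      (auto intro: fmeasurableD)
  moreover have "measure lebesgue H = s ^ 3"
    unfolding H_def using measure_homothety[of s y unit_cube] s by (simp add: measure_unit_cube)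
  ultimately show ?thesis using s by (smt (verit) zero_less_power)
qed

lemma energy_replace_le:
  assumes "y \<in> Y" and g: "g integrable_on voronoi_cell Y y"
    and le: "\<And>x. x \<in> voronoi_cell Y y \<Longrightarrow> (infdist x (insert q (Y - {y})))\<^sup>2 \<le> g x"
  shows "energy (insert q (Y - {y}))
           \<le> energy Y + integral (voronoi_cell Y y) (\<lambda>x. g x - (dist x y)\<^sup>2)"
proof -
  define V where "V = voronoi_cell Y y"
  define Y' where "Y' = insert q (Y - {y})"
  define k where "k = (\<lambda>x. if x \<in> V then g x - (dist x y)\<^sup>2 else 0)"
  have int_dist: "(\<lambda>x. (infdist x A)\<^sup>2) integrable_on unit_cube" for A :: "(real^3) set"
    unfolding unit_cube_eq_cbox by (intro integrable_continuous continuous_intros)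
  have "(\<lambda>x. g x - (dist x y)\<^sup>2) integrable_on V"
    unfolding V_def
    by (intro integrable_diff[OF g] integrable_on_compact_continuous compact_voronoi_cell continuous_intros)
  then have int_k: "k integrable_on unit_cube"
    and integral_k: "integral unit_cube k = integral V (\<lambda>x. g x - (dist x y)\<^sup>2)"
    using voronoi_cell_subset_unit_cube[of Y y]
    by (simp_all add: k_def V_def integrable_restrict_Int integral_restrict_Int Int_absorb2)
  have "(infdist x Y')\<^sup>2 \<le> (infdist x Y)\<^sup>2 + k x" if x: "x \<in> unit_cube" for x
  proof (cases "x \<in> V")
    case True
    then show ?thesis
      using le[of x] infdist_voronoi_cell[OF assms(1), of x] by (simp add: k_def V_def Y'_def)
  next
    case False
    then have "infdist x Y' \<le> infdist x Y"
      using infdist_replace_outside_voronoi_cell[OF assms(1) x] by (simp add: V_def Y'_def)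
    then show ?thesis using False by (simp add: k_def power_mono infdist_nonneg)
  qed
  then have "energy Y' \<le> integral unit_cube (\<lambda>x. (infdist x Y)\<^sup>2 + k x)"
    unfolding energy_def by (intro integral_le integrable_add int_dist int_k)
  also have "\<dots> = energy Y + integral V (\<lambda>x. g x - (dist x y)\<^sup>2)"
    using integral_k by (simp add: energy_def integral_add int_dist int_k)
  finally show ?thesis by (simp add: V_def Y'_def)
qed

definition optimal_quantizer :: "(real^3) set \<Rightarrow> bool" where
  "optimal_quantizer Y \<longleftrightarrow> Y \<subseteq> unit_cube \<and> finite Y \<and>
     (\<forall>Y'. Y' \<subseteq> unit_cube \<longrightarrow> finite Y' \<longrightarrow> card Y' = card Y \<longrightarrow> energy Y \<le> energy Y')"

lemma optimal_quantizer_cell_integral_le: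
  assumes opt: "optimal_quantizer Y" and "y \<in> Y" "q \<in> unit_cube" "q \<notin> Y - {y}"
    and "g integrable_on voronoi_cell Y y"
    and "\<And>x. x \<in> voronoi_cell Y y \<Longrightarrow> (infdist x (insert q (Y - {y})))\<^sup>2 \<le> g x"
  shows "integral (voronoi_cell Y y) (\<lambda>x. (dist x y)\<^sup>2) \<le> integral (voronoi_cell Y y) g"
proof -
  have "finite Y" "Y \<subseteq> unit_cube" using opt by (auto simp: optimal_quantizer_def)
  moreover have "card Y > 0" using \<open>finite Y\<close> assms(2) card_gt_0_iff by blast
  ultimately have "card (insert q (Y - {y})) = card Y" "insert q (Y - {y}) \<subseteq> unit_cube"
    using assms(2-4) by (auto simp: card.insert_remove card_Suc_Diff1)
  then have "energy Y \<le> energy (insert q (Y - {y}))"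
    using opt \<open>finite Y\<close> by (auto simp: optimal_quantizer_def)
  also have "\<dots> \<le> energy Y + integral (voronoi_cell Y y) (\<lambda>x. g x - (dist x y)\<^sup>2)"
    using energy_replace_le assms(2,5,6) by blast
  also have "\<dots> = energy Y + integral (voronoi_cell Y y) g - integral (voronoi_cell Y y) (\<lambda>x. (dist x y)\<^sup>2)"
    using assms(5)
    by (simp add: integral_diff integrable_on_compact_continuous compact_voronoi_cell continuous_intros)
  finally show ?thesis by simp
qed

lemma optimal_quantizer_centroid:
  assumes opt: "optimal_quantizer Y" and yY: "y \<in> Y"
  shows "integral (voronoi_cell Y y) (\<lambda>x. x - y) = 0"
proof (rule ccontr)
  define V where "V = voronoi_cell Y y"
  define m where "m = integral V (\<lambda>x. x - y)"
  define \<mu> where "\<mu> = measure lebesgue V"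
  assume "integral (voronoi_cell Y y) (\<lambda>x. x - y) \<noteq> 0"
  then have mm: "m \<bullet> m > 0" by (simp add: m_def V_def)
  have "finite Y" using opt by (simp add: optimal_quantizer_def)
  then obtain \<delta> where \<delta>: "\<delta> > 0" "\<And>w. w \<in> Y \<Longrightarrow> w \<noteq> y \<Longrightarrow> \<delta> \<le> dist y w"
    using finite_set_avoid[of Y y] by blast
  \<comment> \<open>small enough that the move pays off (\<open>s * \<mu> < 2\<close>) and that q stays nearer to y
      than the other generators are, so no two generators merge\<close>
  define s where "s = min (1 / (\<mu> + 1)) (\<delta> / (norm m + 1))"
  have pos: "\<mu> + 1 > 0" "norm m + 1 > 0" by (simp_all add: \<mu>_def add_nonneg_pos)
  have "s \<le> 1 / (\<mu> + 1)" "s \<le> \<delta> / (norm m + 1)" by (simp_all add: s_def)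
  moreover have "s > 0" using pos \<delta>(1) by (simp add: s_def)
  ultimately have s: "s > 0" "s * (\<mu> + 1) \<le> 1" "s * (norm m + 1) \<le> \<delta>"
    using pos by (simp_all add: pos_le_divide_eq)
  define q where "q = closest_point unit_cube (y + s *\<^sub>R m)"
  have yQ: "y \<in> unit_cube" using opt yY by (auto simp: optimal_quantizer_def)
  have closest: "dist x q \<le> dist x (y + s *\<^sub>R m)" if "x \<in> unit_cube" for x
    unfolding q_def using that by (intro dist_closest_point_le convex_unit_cube closed_unit_cube)
  have "dist y q < \<delta>"
    using closest[OF yQ] s by (simp add: dist_norm algebra_simps)
  then have "q \<notin> Y - {y}" using \<delta>(2) by force
  moreover have "q \<in> unit_cube"
    unfolding q_def using yQ by (intro closest_point_in_set closed_unit_cube) auto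
  ultimately have "integral V (\<lambda>x. (dist x y)\<^sup>2) \<le> integral V (\<lambda>x. (dist x (y + s *\<^sub>R m))\<^sup>2)"
    unfolding V_def
  proof (intro optimal_quantizer_cell_integral_le[OF opt yY])
    fix x assume "x \<in> voronoi_cell Y y"
    then have "dist x q \<le> dist x (y + s *\<^sub>R m)"
      using closest voronoi_cell_subset_unit_cube by blast
    moreover have "infdist x (insert q (Y - {y})) \<le> dist x q" by (simp add: infdist_le)
    ultimately show "(infdist x (insert q (Y - {y})))\<^sup>2 \<le> (dist x (y + s *\<^sub>R m))\<^sup>2"
      by (simp add: power_mono infdist_nonneg)
  qed (auto intro!: integrable_on_compact_continuous compact_voronoi_cell continuous_intros)
  also have "\<dots> = integral V (\<lambda>x. (dist x y)\<^sup>2) - 2 * s * (m \<bullet> m) + s\<^sup>2 * (m \<bullet> m) * \<mu>"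
    using integral_dist_sq_shift[OF compact_voronoi_cell, of Y y y "s *\<^sub>R m"]
    by (simp add: V_def m_def \<mu>_def power2_norm_eq_inner power_mult_distrib)
  finally have "(m \<bullet> m) * (2 * s) \<le> (m \<bullet> m) * (s * (s * \<mu>))"
    by (simp add: power2_eq_square algebra_simps)
  then have "2 \<le> s * \<mu>" using mm s(1) by simp
  then show False using s by (simp add: algebra_simps)
qed

lemma optimal_quantizer_subcell_gain_le:
  assumes opt: "optimal_quantizer Y" and yY: "y \<in> Y" and zY: "z \<in> Y - {y}"
    and pV: "p \<in> voronoi_cell Y y" "p \<noteq> y"
    and S: "compact S" "S \<subseteq> voronoi_cell Y y"
  shows "integral S (\<lambda>x. (dist x z)\<^sup>2 - (dist x p)\<^sup>2)
           \<le> (dist y z)\<^sup>2 * measure lebesgue (voronoi_cell Y y)"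
proof -
  define V where "V = voronoi_cell Y y"
  define k where "k = (\<lambda>x. (dist x z)\<^sup>2 - (dist x p)\<^sup>2)"
  \<comment> \<open>in the competitor p serves S and z serves the rest of V\<close>
  define g where "g = (\<lambda>x. (dist x z)\<^sup>2 - (if x \<in> S then k x else 0))"
  have cV: "compact V" by (simp add: V_def compact_voronoi_cell)
  have "k integrable_on S"
    unfolding k_def using S(1) by (intro integrable_on_compact_continuous continuous_intros)
  then have int_k: "(\<lambda>x. if x \<in> S then k x else 0) integrable_on V"
    and integral_k: "integral V (\<lambda>x. if x \<in> S then k x else 0) = integral S k"
    using S(2) by (simp_all add: V_def integrable_restrict_Int integral_restrict_Int Int_absorb2)
  have int_z: "(\<lambda>x. (dist x z)\<^sup>2) integrable_on V"
    using cV by (intro integrable_on_compact_continuous continuous_intros)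
  have "p \<notin> Y - {y}"
    using pV unfolding voronoi_cell_def by force
  moreover have "p \<in> unit_cube" using pV(1) voronoi_cell_subset_unit_cube by blast
  ultimately have "integral V (\<lambda>x. (dist x y)\<^sup>2) \<le> integral V g"
    unfolding V_def
  proof (intro optimal_quantizer_cell_integral_le[OF opt yY])
    show "g integrable_on voronoi_cell Y y"
      unfolding g_def using int_z int_k by (simp add: V_def integrable_diff)
    fix x
    have "infdist x (insert p (Y - {y})) \<le> dist x p" "infdist x (insert p (Y - {y})) \<le> dist x z"
      using zY by (auto intro: infdist_le)
    then show "(infdist x (insert p (Y - {y})))\<^sup>2 \<le> g x"
      by (simp add: g_def k_def power_mono infdist_nonneg)
  qed
  also have "integral V g = integral V (\<lambda>x. (dist x z)\<^sup>2) - integral S k"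
    unfolding g_def using integral_diff[OF int_z int_k] integral_k by simp
  also have "integral V (\<lambda>x. (dist x z)\<^sup>2)
      = integral V (\<lambda>x. (dist x y)\<^sup>2) + (dist y z)\<^sup>2 * measure lebesgue V"
    using integral_dist_sq_shift[OF cV, of y "z - y"] optimal_quantizer_centroid[OF opt yY]
    by (simp add: V_def dist_norm norm_minus_commute)
  finally show ?thesis by (simp add: V_def k_def)
qed

lemma optimal_quantizer_farthest_sq_le:
  assumes opt: "optimal_quantizer Y" and yY: "y \<in> Y" and zY: "z \<in> Y - {y}"
    and pV: "p \<in> voronoi_cell Y y"
    and farthest: "\<And>x. x \<in> voronoi_cell Y y \<Longrightarrow> dist x y \<le> dist p y"
    and small: "100 * dist y z < dist p y"
  shows "(dist p y)\<^sup>2 \<le> 2048 * (dist y z)\<^sup>2"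
proof -
  define V where "V = voronoi_cell Y y"
  define R where "R = dist p y"
  define \<delta> where "\<delta> = dist y z"
  define S where "S = (\<lambda>x. p + (1/8) *\<^sub>R (x - p)) ` V"
  have "\<delta> > 0" using zY by (auto simp: \<delta>_def)
  have "100 * \<delta> < R" using small by (simp add: R_def \<delta>_def)
  then have "p \<noteq> y" using \<open>\<delta> > 0\<close> by (auto simp: R_def)
  have "S \<subseteq> V"
    unfolding S_def V_def by (intro convex_homothety_image_subset convex_voronoi_cell pV) auto
  moreover have "compact S"
    unfolding S_def V_def by (intro compact_continuous_image continuous_intros compact_voronoi_cell)
  ultimately have gain: "integral S (\<lambda>x. (dist x z)\<^sup>2 - (dist x p)\<^sup>2) \<le> \<delta>\<^sup>2 * measure lebesgue V"
    using optimal_quantizer_subcell_gain_le[OF opt yY zY pV \<open>p \<noteq> y\<close>] by (simp add: V_def \<delta>_def)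
  have "R\<^sup>2 / 4 \<le> (dist v z)\<^sup>2 - (dist v p)\<^sup>2" if "v \<in> S" for v
  proof -
    obtain x where x: "x \<in> V" "v = p + (1/8) *\<^sub>R (x - p)" using \<open>v \<in> S\<close> unfolding S_def by auto
    have "dist v p = dist x p / 8" using x by (simp add: dist_norm)
    also have "\<dots> \<le> (dist x y + dist y p) / 8" using dist_triangle[of x p y] by simp
    finally have vp: "dist v p \<le> R / 4"
      using farthest[of x] x(1) by (simp add: V_def R_def dist_commute)
    have "R \<le> dist v p + dist v z + \<delta>"
      using dist_triangle[of p y v] dist_triangle[of v y z] by (simp add: R_def \<delta>_def dist_commute)
    then have "7 / 10 * R \<le> dist v z"
      using vp \<open>100 * \<delta> < R\<close> \<open>\<delta> > 0\<close> by linarith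
    then have "(7 / 10 * R)\<^sup>2 \<le> (dist v z)\<^sup>2"
      using \<open>100 * \<delta> < R\<close> \<open>\<delta> > 0\<close> by (intro power_mono) auto
    moreover have "(dist v p)\<^sup>2 \<le> (R / 4)\<^sup>2" using vp by (intro power_mono) auto
    ultimately show ?thesis
      by (simp add: power_divide power_mult_distrib) (use zero_le_power2[of R] in linarith)
  qed
  then have "integral S (\<lambda>x. R\<^sup>2 / 4) \<le> integral S (\<lambda>x. (dist x z)\<^sup>2 - (dist x p)\<^sup>2)"
    using \<open>compact S\<close>
    by (intro integral_le integrable_on_compact_continuous continuous_intros) auto
  moreover have "integral S (\<lambda>x. R\<^sup>2 / 4) = R\<^sup>2 / 4 * (measure lebesgue V / 512)"
    using lmeasure_integral[OF lmeasurable_compact[OF \<open>compact S\<close>]]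
      integral_cmul[of S "R\<^sup>2 / 4" "\<lambda>x. 1::real"] measure_homothety[of "1/8" p V]
    by (simp add: S_def power_divide)
  ultimately have "R\<^sup>2 * measure lebesgue V \<le> (2048 * \<delta>\<^sup>2) * measure lebesgue V"
    using gain by simp
  moreover have "measure lebesgue V > 0"
    using opt yY by (auto simp: V_def optimal_quantizer_def intro!: measure_voronoi_cell_pos)
  ultimately show ?thesis by (simp add: R_def \<delta>_def)
qed

lemma optimal_quantizer_farthest_le_nearest:
  assumes "optimal_quantizer Y" "y \<in> Y" "z \<in> Y - {y}" "p \<in> voronoi_cell Y y"
    and "\<And>x. x \<in> voronoi_cell Y y \<Longrightarrow> dist x y \<le> dist p y"
  shows "dist p y \<le> 100 * dist y z"
proof (rule ccontr)
  assume "\<not> dist p y \<le> 100 * dist y z"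
  then have small: "100 * dist y z < dist p y" by simp
  then have "(dist p y)\<^sup>2 \<le> 2048 * (dist y z)\<^sup>2"
    using optimal_quantizer_farthest_sq_le[OF assms] by blast
  moreover have "(100 * dist y z)\<^sup>2 < (dist p y)\<^sup>2"
    using small by (intro power_strict_mono) auto
  moreover have "(dist y z)\<^sup>2 > 0" using assms(3) by auto
  ultimately show False by (simp add: power_mult_distrib)
qed

definition separation_constant :: real where
  "separation_constant = sqrt (1 + (2^4 * 3^3) / (5^2 * 10^3)) - 1"

lemma separation_constant_bounds: "0 < separation_constant" "separation_constant \<le> 1 / 100"
proof -
  have "sqrt 1 < sqrt (1 + (2^4 * 3^3) / (5^2 * 10^3) :: real)" by (subst real_sqrt_less_iff) simp
  then show "0 < separation_constant" by (simp add: separation_constant_def)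
  have "sqrt (1 + (2^4 * 3^3) / (5^2 * 10^3) :: real) \<le> sqrt ((101 / 100)\<^sup>2)"
    by (rule real_sqrt_le_mono) (simp add: power2_eq_square)
  then show "separation_constant \<le> 1 / 100" by (simp add: separation_constant_def)
qed

lemma Gamma2_mult_measure_le:
  fixes V :: "(real^3) set"
  assumes "V \<in> lmeasurable" "V \<subseteq> cball y R" "R \<ge> 0"
  shows "Gamma2 * measure lebesgue V powr (1/3) \<le> R * separation_constant"
proof -
  define \<omega> where "\<omega> = 4 * pi / 3"
  have "measure lebesgue V \<le> measure lebesgue (cball y R)"
    using assms(1,2) by (intro measure_mono_fmeasurable) auto
  also have "\<dots> = \<omega> * R ^ 3"
    using content_cball[of R y] unit_ball_vol_3 assms(3) by (simp add: \<omega>_def)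
  finally have "measure lebesgue V powr (1/3) \<le> (\<omega> * R ^ 3) powr (1/3)"
    by (intro powr_mono2) auto
  also have "\<dots> = \<omega> powr (1/3) * (R ^ 3) powr (1/3)"
    by (rule powr_mult)
  also have "(R ^ 3) powr (1/3) = (R powr 3) powr (1/3)"
    using assms(3) by simp
  also have "\<dots> = R"
    using assms(3) by (subst powr_powr) simp
  finally have vol: "measure lebesgue V powr (1/3) \<le> \<omega> powr (1/3) * R" .
  have Gamma2: "Gamma2 = separation_constant * \<omega> powr (-1/3)"
    by (simp add: Gamma2_def separation_constant_def \<omega>_def)
  have "Gamma2 * measure lebesgue V powr (1/3) \<le> Gamma2 * (\<omega> powr (1/3) * R)"
    using vol separation_constant_bounds(1) by (intro mult_left_mono) (simp_all add: Gamma2)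
  also have "\<dots> = R * separation_constant * (\<omega> powr (-1/3) * \<omega> powr (1/3))"
    by (simp add: Gamma2)
  also have "\<omega> powr (-1/3) * \<omega> powr (1/3) = 1"
    by (simp add: \<omega>_def flip: powr_add)
  finally show ?thesis by simp
qed

theorem lemma3p2:
  fixes n :: nat and Yn :: "(real^3) set" and y :: "real^3"
  assumes "n \<ge> 2"
    and "Yn \<subseteq> unit_cube" and "finite Yn" and "card Yn = n"
    and "\<And>Y. Y \<subseteq> unit_cube \<Longrightarrow> finite Y \<Longrightarrow> card Y = n \<Longrightarrow> energy Yn \<le> energy Y"
    and "y \<in> Yn"
  shows "Min ((\<lambda>z. dist y z) ` (Yn - {y}))
           \<ge> (SUP z'\<in>frontier (voronoi_cell Yn y). dist z' y)
               * (sqrt (1 + (2^4 * 3^3) / (5^2 * 10^3)) - 1)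
       \<and> (SUP z'\<in>frontier (voronoi_cell Yn y). dist z' y)
               * (sqrt (1 + (2^4 * 3^3) / (5^2 * 10^3)) - 1)
           \<ge> Gamma2 * (measure lebesgue (voronoi_cell Yn y)) powr (1/3)"
proof -
  define V where "V = voronoi_cell Yn y"
  have opt: "optimal_quantizer Yn" using assms(2-5) by (auto simp: optimal_quantizer_def)
  have "y \<in> V" using assms(2,6) by (auto simp: V_def intro: generator_in_voronoi_cell)
  then obtain p where p: "p \<in> frontier V" "(SUP z'\<in>frontier V. dist z' y) = dist p y"
    and farthest: "\<And>x. x \<in> V \<Longrightarrow> dist x y \<le> dist p y"
    using compact_farthest_in_frontier[of V y] compact_voronoi_cell by (auto simp: V_def)
  have "p \<in> V" using p(1) compact_voronoi_cell frontier_subset_compact by (auto simp: V_def)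
  have "card (Yn - {y}) = n - 1" using assms(4,6) by simp
  then have "Yn - {y} \<noteq> {}" using assms(1) by (intro notI) simp
  then have "Min ((\<lambda>z. dist y z) ` (Yn - {y})) \<in> (\<lambda>z. dist y z) ` (Yn - {y})"
    using assms(3) by (intro Min_in) auto
  then obtain z where z: "z \<in> Yn - {y}" "Min ((\<lambda>z. dist y z) ` (Yn - {y})) = dist y z"
    by auto
  have "dist p y \<le> 100 * dist y z"
    using optimal_quantizer_farthest_le_nearest[OF opt assms(6) z(1)] \<open>p \<in> V\<close> farthest
    by (simp add: V_def)
  then have "dist p y * separation_constant \<le> dist y z"
    using separation_constant_bounds mult_left_mono[of separation_constant "1/100" "dist p y"]
    by simp
  moreover have "Gamma2 * measure lebesgue V powr (1/3) \<le> dist p y * separation_constant"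
    using farthest by (intro Gamma2_mult_measure_le lmeasurable_compact)
      (auto simp: V_def compact_voronoi_cell dist_commute)
  ultimately show ?thesis using p(2) z(2) by (simp add: V_def separation_constant_def)
qed

end
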